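(* Let $\langle D,\Gamma,\Delta\rangle$ be a planning problem with $(D,\Gamma)$ a consistent action theory and $\Delta=p_1\wedge\dots\wedge p_k$ a conjunction of fluent literals, and let $n\ge 0$. Then: (i) if $s_0a_0s_1\dots a_{n-1}s_n$ is a trajectory in $D$ with $s_0=s_0^\Gamma$ and $s_n\models\Delta$, then there exists an answer set $M$ of $\Pi_n$ such that $occ(a_i,i)\in M$ for all $i\in\{0,\dots,n-1\}$ and $s_i=s_i(M)$ for all $i\in\{0,\dots,n\}$; (ii) if $M$ is an answer set of $\Pi_n$, then there exists an integer $0\le k\le n$ and actions $a_0,\dots,a_{k-1}$ with $occ(a_i,i)\in M$ for $0\le i<k$ such that $s_0(M)a_0s_1(M)\dots a_{k-1}s_k(M)$ is a trajectory in $D$ with $s_k(M)\models\Delta$, and if $k<n$ then no action is executable in $s_k(M)$.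
   Context: Action language $\mathcal{B}$: fix finite sets $\mathbf{F}$ of fluents and $\mathbf{A}$ of actions. A fluent literal is $f$ or $\neg f$ ($f\in\mathbf{F}$); the complement $\bar l$ of $f$ is $\neg f$ and of $\neg f$ is $f$. A set of fluent literals is consistent if it contains no pair $f,\neg f$; an interpretation is a maximal consistent set. For a set $u$ of literals, $u\models p_1\wedge\dots\wedge p_k$ means $\{p_1,\dots,p_k\}\subseteq u$. A domain description $D$ is a finite set of static causal laws $\mathbf{caused}(\{p_1,\dots,p_k\},f)$ (their set is $D_C$), dynamic causal laws $\mathbf{causes}(a,f,\{p_1,\dots,p_k\})$ and executability conditions $\mathbf{executable}(a,\{p_1,\dots,p_k\})$, with $a\in\mathbf{A}$ and $f,p_i$ fluent literals; $\Gamma$ is a set of propositions $\mathbf{initially}(f)$. A consistent set $u$ is closed under $D_C$ if for every $\mathbf{caused}(P,f)\in D_C$ with $P\subseteq u$, $f\in u$; $Cl_{D_C}(u)$ is the least consistent superset of $u$ closed under $D_C$ (undefined if none). A state is an interpretation closed under $D_C$. Action $a$ is executable in state $s$ if some $\mathbf{executable}(a,P)\in D$ has $P\subseteq s$. $E(a,s)=\{f\mid \mathbf{causes}(a,f,P)\in D,\ P\subseteq s\}$. $\Phi(a,s)=\{s'\mid s'\text{ a state},\ s'=Cl_{D_C}(E(a,s)\cup(s\cap s'))\}$ if $a$ is executable in $s$, and $\Phi(a,s)=\emptyset$ otherwise. A trajectory is a sequence $s_0a_0s_1\dots a_{m-1}s_m$ of states $s_i$ and actions $a_i$ with $s_{i+1}\in\Phi(a_i,s_i)$.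 $D$ is consistent if $\Phi(a,s)\ne\emptyset$ whenever $a$ is executable in state $s$; $(D,\Gamma)$ is consistent if $D$ is consistent and $s_0^\Gamma:=\{f\mid\mathbf{initially}(f)\in\Gamma\}$ is a state of $D$. Answer sets: a ground normal program consists of rules $h\leftarrow b_1,\dots,b_m,\mathit{not}\,c_1,\dots,\mathit{not}\,c_r$ and constraints $\bot\leftarrow b_1,\dots,b_m,\mathit{not}\,c_1,\dots,\mathit{not}\,c_r$. For a set $S$ of atoms, the reduct $\Pi^S$ deletes every rule/constraint containing $\mathit{not}\,c$ with $c\in S$ and deletes all $\mathit{not}$-literals from the rest; $S$ is an answer set of $\Pi$ if $S$ is the least set of atoms closed under the non-constraint rules of $\Pi^S$ and no constraint of $\Pi^S$ has its whole body contained in $S$. The program $\pi$ (ground; $t$ ranges over $\{0,\dots,n\}$ unless stated): (1) $holds(l,0)\leftarrow$ for each $\mathbf{initially}(l)\in\Gamma$; (2) $possible(a,t)\leftarrow holds(p_1,t),\dots,holds(p_k,t)$ for each $\mathbf{executable}(a,\{p_1,\dots,p_k\})\in D$; (3) for $t\in\{0,\dots,n-1\}$, $holds(f,t+1)\leftarrow occ(a,t),possible(a,t),holds(p_1,t),\dots,holds(p_k,t)$ for each $\mathbf{causes}(a,f,\{p_1,\dots,p_k\})\in D$; (4) $holds(f,t)\leftarrow holds(p_1,t),\dots,holds(p_k,t)$ for each $\mathbf{caused}(\{p_1,\dots,p_k\},f)\in D$; (5) $occ(a,t)\leftarrow possible(a,t),\mathit{not}\,nocc(a,t)$ for each action $a$;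 (6) $nocc(a,t)\leftarrow occ(b,t)$ for each pair of distinct actions $a\ne b$; (7) for $t\in\{0,\dots,n-1\}$, $holds(l,t+1)\leftarrow holds(l,t),\mathit{not}\,holds(\bar l,t+1)$ for each fluent literal $l$; (8) $\bot\leftarrow holds(f,t),holds(\neg f,t)$ for each fluent $f$. $\Pi_n$ is $\pi$ together with the rule $goal\leftarrow holds(p_1,n),\dots,holds(p_k,n)$ (where $\Delta=p_1\wedge\dots\wedge p_k$) and the constraint $\bot\leftarrow\mathit{not}\,goal$. For a set $M$ of atoms, $s_i(M)=\{l\mid l\text{ a fluent literal},\ holds(l,i)\in M\}$. *)

theory Defs
  imports Main
begin

datatype 'f lit = Pos 'f | Neg 'f

fun comp :: "'f lit \<Rightarrow> 'f lit" where
  "comp (Pos f) = Neg f"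
| "comp (Neg f) = Pos f"

(* A domain description: static causal laws caused(P,f), dynamic causal laws
   causes(a,f,P), executability conditions executable(a,P). *)
record ('f, 'a) domain =
  stat :: "('f lit set \<times> 'f lit) set"
  dyn  :: "('a \<times> 'f lit \<times> 'f lit set) set"
  exe  :: "('a \<times> 'f lit set) set"

definition finite_domain :: "('f, 'a) domain \<Rightarrow> bool" where
  "finite_domain D \<longleftrightarrow> finite (stat D) \<and> finite (dyn D) \<and> finite (exe D)
     \<and> (\<forall>(P,f)\<in>stat D. finite P) \<and> (\<forall>(a,f,P)\<in>dyn D. finite P) \<and> (\<forall>(a,P)\<in>exe D. finite P)"

definition consistent_lits :: "'f lit set \<Rightarrow> bool" where
  "consistent_lits u \<longleftrightarrow> (\<forall>f. \<not> (Pos f \<in> u \<and> Neg f \<in> u))"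

definition is_interpretation :: "'f lit set \<Rightarrow> bool" where
  "is_interpretation u \<longleftrightarrow> consistent_lits u \<and>
     (\<forall>v. consistent_lits v \<and> u \<subseteq> v \<longrightarrow> v = u)"

definition closed_under :: "('f lit set \<times> 'f lit) set \<Rightarrow> 'f lit set \<Rightarrow> bool" where
  "closed_under DC u \<longleftrightarrow> consistent_lits u \<and> (\<forall>(P,f)\<in>DC. P \<subseteq> u \<longrightarrow> f \<in> u)"

definition is_Cl :: "('f lit set \<times> 'f lit) set \<Rightarrow> 'f lit set \<Rightarrow> 'f lit set \<Rightarrow> bool" where
  "is_Cl DC u v \<longleftrightarrow> u \<subseteq> v \<and> closed_under DC v \<and>
     (\<forall>w. u \<subseteq> w \<and> closed_under DC w \<longrightarrow> v \<subseteq> w)"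

definition is_state :: "('f, 'a) domain \<Rightarrow> 'f lit set \<Rightarrow> bool" where
  "is_state D s \<longleftrightarrow> is_interpretation s \<and> closed_under (stat D) s"

definition executable_in :: "('f, 'a) domain \<Rightarrow> 'a \<Rightarrow> 'f lit set \<Rightarrow> bool" where
  "executable_in D a s \<longleftrightarrow> (\<exists>P. (a, P) \<in> exe D \<and> P \<subseteq> s)"

definition eff :: "('f, 'a) domain \<Rightarrow> 'a \<Rightarrow> 'f lit set \<Rightarrow> 'f lit set" where
  "eff D a s = {f. \<exists>P. (a, f, P) \<in> dyn D \<and> P \<subseteq> s}"

definition Phi :: "('f, 'a) domain \<Rightarrow> 'a \<Rightarrow> 'f lit set \<Rightarrow> 'f lit set set" where
  "Phi D a s = (if executable_in D a s
     then {s'. is_state D s' \<and> is_Cl (stat D) (eff D a s \<union> (s \<inter> s')) s'}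
     else {})"

definition trajectory :: "('f, 'a) domain \<Rightarrow> (nat \<Rightarrow> 'f lit set) \<Rightarrow> (nat \<Rightarrow> 'a) \<Rightarrow> nat \<Rightarrow> bool" where
  "trajectory D s a m \<longleftrightarrow> (\<forall>i\<le>m. is_state D (s i)) \<and> (\<forall>i<m. s (Suc i) \<in> Phi D (a i) (s i))"

definition consistent_domain :: "('f, 'a) domain \<Rightarrow> bool" where
  "consistent_domain D \<longleftrightarrow>
     (\<forall>a s. is_state D s \<and> executable_in D a s \<longrightarrow> Phi D a s \<noteq> {})"

(* Gamma is represented by the set of literals l with initially(l) in Gamma, i.e. s_0^Gamma *)
definition consistent_theory :: "('f, 'a) domain \<Rightarrow> 'f lit set \<Rightarrow> bool" where
  "consistent_theory D \<Gamma> \<longleftrightarrow> consistent_domain D \<and> is_state D \<Gamma>"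

datatype ('f, 'a) atom =
    Holds "'f lit" nat | Possible 'a nat | Occ 'a nat | Nocc 'a nat | Goal

(* a ground rule: (head, positive body, negated body); head None = constraint (bottom) *)
type_synonym 'x rule = "'x option \<times> 'x set \<times> 'x set"

definition reduct :: "'x rule set \<Rightarrow> 'x set \<Rightarrow> ('x option \<times> 'x set) set" where
  "reduct \<Pi> S = {(h, B). \<exists>N. (h, B, N) \<in> \<Pi> \<and> N \<inter> S = {}}"

definition rules_closed :: "('x option \<times> 'x set) set \<Rightarrow> 'x set \<Rightarrow> bool" where
  "rules_closed R X \<longleftrightarrow> (\<forall>h B. (Some h, B) \<in> R \<and> B \<subseteq> X \<longrightarrow> h \<in> X)"

definition answer_set :: "'x rule set \<Rightarrow> 'x set \<Rightarrow> bool" where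
  "answer_set \<Pi> S \<longleftrightarrow>
     rules_closed (reduct \<Pi> S) S \<and>
     (\<forall>X. rules_closed (reduct \<Pi> S) X \<longrightarrow> S \<subseteq> X) \<and>
     (\<forall>B. (None, B) \<in> reduct \<Pi> S \<longrightarrow> \<not> B \<subseteq> S)"

definition holds_at :: "'f lit set \<Rightarrow> nat \<Rightarrow> ('f, 'a) atom set" where
  "holds_at P t = (\<lambda>p. Holds p t) ` P"

definition prog_pi :: "('f, 'a) domain \<Rightarrow> 'f lit set \<Rightarrow> nat \<Rightarrow> ('f, 'a) atom rule set" where
  "prog_pi D \<Gamma> n =
     {(Some (Holds l 0), {}, {}) | l. l \<in> \<Gamma>}
   \<union> {(Some (Possible a t), holds_at P t, {}) | a P t. (a, P) \<in> exe D \<and> t \<le> n}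
   \<union> {(Some (Holds f (Suc t)), {Occ a t, Possible a t} \<union> holds_at P t, {}) | a f P t.
        (a, f, P) \<in> dyn D \<and> t < n}
   \<union> {(Some (Holds f t), holds_at P t, {}) | P f t. (P, f) \<in> stat D \<and> t \<le> n}
   \<union> {(Some (Occ a t), {Possible a t}, {Nocc a t}) | a t. t \<le> n}
   \<union> {(Some (Nocc a t), {Occ b t}, {}) | a b t. a \<noteq> b \<and> t \<le> n}
   \<union> {(Some (Holds l (Suc t)), {Holds l t}, {Holds (comp l) (Suc t)}) | l t. t < n}
   \<union> {(None, {Holds (Pos f) t, Holds (Neg f) t}, {}) | f t. t \<le> n}"

definition prog_Pi :: "('f, 'a) domain \<Rightarrow> 'f lit set \<Rightarrow> 'f lit set \<Rightarrow> nat \<Rightarrow> ('f, 'a) atom rule set" where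
  "prog_Pi D \<Gamma> \<Delta> n = prog_pi D \<Gamma> n
     \<union> {(Some Goal, holds_at \<Delta> n, {}), (None, {}, {Goal})}"

definition s_of :: "('f, 'a) atom set \<Rightarrow> nat \<Rightarrow> 'f lit set" where
  "s_of M i = {l. Holds l i \<in> M}"

end

theory Submission
  imports Defs
begin

text \<open>
  Part (ii): an answer set is supported and minimal.  Supportedness shows that at most one action
  occurs at each time, and one does whenever some action is executable; minimality, applied level
  by level, shows that the literals holding at time \<open>t + 1\<close> form the least closed set containing
  the effects of that action and the literals kept by inertia, which is the fixpoint equation
  defining \<open>\<Phi>\<close>.  Inertia freezes the state once no action is executable, so the goal, which the
  program enforces at the horizon \<open>n\<close>, already holds at the first such time.

  Part (i): conversely, the atoms read off a trajectory form an answer set.  Its minimality is proved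
  by induction on time and, within one time step, by induction along the closure \<open>Cl\<close>.
\<close>

section \<open>Literals, interpretations and closures\<close>

lemma comp_comp [simp]: "comp (comp l) = l"
  by (cases l) auto

lemma consistent_lits_comp: "consistent_lits u \<Longrightarrow> l \<in> u \<Longrightarrow> comp l \<notin> u"
  unfolding consistent_lits_def by (cases l) auto

lemma consistent_lits_subset: "consistent_lits v \<Longrightarrow> u \<subseteq> v \<Longrightarrow> consistent_lits u"
  unfolding consistent_lits_def by blast

lemma consistent_lits_insert:
  "consistent_lits u \<Longrightarrow> comp l \<notin> u \<Longrightarrow> consistent_lits (insert l u)"
  unfolding consistent_lits_def by (cases l) auto

lemma is_interpretation_iff:
  "is_interpretation u \<longleftrightarrow> consistent_lits u \<and> (\<forall>l. l \<in> u \<or> comp l \<in> u)"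
proof
  assume u: "is_interpretation u"
  then have cons: "consistent_lits u"
    unfolding is_interpretation_def by blast
  have "l \<in> u \<or> comp l \<in> u" for l
  proof (rule ccontr)
    assume "\<not> (l \<in> u \<or> comp l \<in> u)"
    then have "consistent_lits (insert l u)" and "insert l u \<noteq> u"
      using consistent_lits_insert[OF cons] by auto
    then show False
      using u unfolding is_interpretation_def by blast
  qed
  with cons show "consistent_lits u \<and> (\<forall>l. l \<in> u \<or> comp l \<in> u)"
    by blast
next
  assume u: "consistent_lits u \<and> (\<forall>l. l \<in> u \<or> comp l \<in> u)"
  have "v \<subseteq> u" if "consistent_lits v" "u \<subseteq> v" for v
    using u consistent_lits_comp[OF that(1)] that(2) by blast
  then show "is_interpretation u"
    using u unfolding is_interpretation_def by blast
qed

lemma is_interpretation_eq_if_subset: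
  "is_interpretation u \<Longrightarrow> consistent_lits v \<Longrightarrow> u \<subseteq> v \<Longrightarrow> v = u"
  unfolding is_interpretation_def by blast

lemma is_Cl_induct [consumes 2, case_names base step]:
  assumes Cl: "is_Cl DC u v" and "l \<in> v"
    and base: "\<And>l. l \<in> u \<Longrightarrow> P l"
    and step: "\<And>Q f. (Q, f) \<in> DC \<Longrightarrow> Q \<subseteq> v \<Longrightarrow> \<forall>q\<in>Q. P q \<Longrightarrow> P f"
  shows "P l"
proof -
  let ?w = "{l \<in> v. P l}"
  have v: "u \<subseteq> v" "closed_under DC v" "\<And>w. u \<subseteq> w \<Longrightarrow> closed_under DC w \<Longrightarrow> v \<subseteq> w"
    using Cl unfolding is_Cl_def by blast+
  have "f \<in> ?w" if "(Q, f) \<in> DC" "Q \<subseteq> ?w" for Q f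
  proof -
    have "f \<in> v"
      using v(2) that unfolding closed_under_def by blast
    moreover have "P f"
      using step[OF that(1)] that(2) by blast
    ultimately show ?thesis
      by blast
  qed
  moreover have "consistent_lits ?w"
    using v(2) consistent_lits_subset[of v ?w] unfolding closed_under_def by blast
  ultimately have "closed_under DC ?w"
    unfolding closed_under_def by blast
  moreover have "u \<subseteq> ?w"
    using v(1) base by blast
  ultimately have "v \<subseteq> ?w"
    using v(3) by blast
  then show ?thesis
    using \<open>l \<in> v\<close> by blast
qed

section \<open>Answer sets\<close>

lemma answer_set_rule:
  "answer_set \<Pi> M \<Longrightarrow> (Some h, B, N) \<in> \<Pi> \<Longrightarrow> N \<inter> M = {} \<Longrightarrow> B \<subseteq> M \<Longrightarrow> h \<in> M"
  unfolding answer_set_def rules_closed_def reduct_def by blast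

lemma answer_set_constraint:
  "answer_set \<Pi> M \<Longrightarrow> (None, B, N) \<in> \<Pi> \<Longrightarrow> N \<inter> M = {} \<Longrightarrow> \<not> B \<subseteq> M"
  unfolding answer_set_def reduct_def by blast

lemma answer_set_induct [consumes 2, case_names rule]:
  assumes M: "answer_set \<Pi> M" and "x \<in> M"
    and rule: "\<And>h B N. (Some h, B, N) \<in> \<Pi> \<Longrightarrow> N \<inter> M = {} \<Longrightarrow> B \<subseteq> M \<Longrightarrow>
      (\<And>b. b \<in> B \<Longrightarrow> P b) \<Longrightarrow> P h"
  shows "P x"
proof -
  have "rules_closed (reduct \<Pi> M) (M \<inter> {x. P x})"
    unfolding rules_closed_def
  proof (intro allI impI)
    fix h B assume "(Some h, B) \<in> reduct \<Pi> M \<and> B \<subseteq> M \<inter> {x. P x}"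
    then obtain N where "(Some h, B, N) \<in> \<Pi>" "N \<inter> M = {}" "B \<subseteq> M" "\<And>b. b \<in> B \<Longrightarrow> P b"
      unfolding reduct_def by blast
    then show "h \<in> M \<inter> {x. P x}"
      using answer_set_rule[OF M] rule by blast
  qed
  then have "M \<subseteq> {x. P x}"
    using M unfolding answer_set_def by blast
  then show ?thesis
    using \<open>x \<in> M\<close> by blast
qed

lemma answer_set_supported:
  assumes "answer_set \<Pi> M" "x \<in> M"
  shows "\<exists>B N. (Some x, B, N) \<in> \<Pi> \<and> N \<inter> M = {} \<and> B \<subseteq> M"
  using assms by (induction rule: answer_set_induct) blast

section \<open>The rules of the planning program\<close>

lemma prog_Pi_init: "l \<in> \<Gamma> \<Longrightarrow> (Some (Holds l 0), {}, {}) \<in> prog_Pi D \<Gamma> \<Delta> n"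
  unfolding prog_Pi_def prog_pi_def by (simp; blast)

lemma prog_Pi_possible:
  "(a, P) \<in> exe D \<Longrightarrow> t \<le> n \<Longrightarrow> (Some (Possible a t), holds_at P t, {}) \<in> prog_Pi D \<Gamma> \<Delta> n"
  unfolding prog_Pi_def prog_pi_def by (simp; blast)

lemma prog_Pi_dynamic:
  "(a, f, P) \<in> dyn D \<Longrightarrow> t < n \<Longrightarrow>
    (Some (Holds f (Suc t)), {Occ a t, Possible a t} \<union> holds_at P t, {}) \<in> prog_Pi D \<Gamma> \<Delta> n"
  unfolding prog_Pi_def prog_pi_def by (simp; blast)

lemma prog_Pi_static:
  "(P, f) \<in> stat D \<Longrightarrow> t \<le> n \<Longrightarrow> (Some (Holds f t), holds_at P t, {}) \<in> prog_Pi D \<Gamma> \<Delta> n"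
  unfolding prog_Pi_def prog_pi_def by (simp; blast)

lemma prog_Pi_occ: "t \<le> n \<Longrightarrow> (Some (Occ a t), {Possible a t}, {Nocc a t}) \<in> prog_Pi D \<Gamma> \<Delta> n"
  unfolding prog_Pi_def prog_pi_def by (simp; blast)

lemma prog_Pi_nocc: "a \<noteq> b \<Longrightarrow> t \<le> n \<Longrightarrow> (Some (Nocc a t), {Occ b t}, {}) \<in> prog_Pi D \<Gamma> \<Delta> n"
  unfolding prog_Pi_def prog_pi_def by (simp; blast)

lemma prog_Pi_inertia:
  "t < n \<Longrightarrow> (Some (Holds l (Suc t)), {Holds l t}, {Holds (comp l) (Suc t)}) \<in> prog_Pi D \<Gamma> \<Delta> n"
  unfolding prog_Pi_def prog_pi_def by (simp; blast)

lemma prog_Pi_consistency: "t \<le> n \<Longrightarrow> (None, {Holds (Pos f) t, Holds (Neg f) t}, {}) \<in> prog_Pi D \<Gamma> \<Delta> n"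
  unfolding prog_Pi_def prog_pi_def by (simp; blast)

lemma prog_Pi_goal: "(Some Goal, holds_at \<Delta> n, {}) \<in> prog_Pi D \<Gamma> \<Delta> n"
  unfolding prog_Pi_def by blast

lemma prog_Pi_goal_constraint: "(None, {}, {Goal}) \<in> prog_Pi D \<Gamma> \<Delta> n"
  unfolding prog_Pi_def by blast

lemma holds_at_subset_iff: "holds_at P t \<subseteq> M \<longleftrightarrow> P \<subseteq> s_of M t"
  unfolding holds_at_def s_of_def by auto

lemma prog_Pi_rule_cases:
  assumes "(Some h, B, N) \<in> prog_Pi D \<Gamma> \<Delta> n"
  obtains (init) l where "h = Holds l 0" "B = {}" "N = {}" "l \<in> \<Gamma>"
  | (possible) a P t where "h = Possible a t" "B = holds_at P t" "N = {}" "(a, P) \<in> exe D" "t \<le> n"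
  | (dynamic) a f P t where "h = Holds f (Suc t)" "B = {Occ a t, Possible a t} \<union> holds_at P t"
      "N = {}" "(a, f, P) \<in> dyn D" "t < n"
  | (static) P f t where "h = Holds f t" "B = holds_at P t" "N = {}" "(P, f) \<in> stat D" "t \<le> n"
  | (occ) a t where "h = Occ a t" "B = {Possible a t}" "N = {Nocc a t}" "t \<le> n"
  | (nocc) a b t where "h = Nocc a t" "B = {Occ b t}" "N = {}" "a \<noteq> b" "t \<le> n"
  | (inertia) l t where "h = Holds l (Suc t)" "B = {Holds l t}" "N = {Holds (comp l) (Suc t)}" "t < n"
  | (goal) "h = Goal" "B = holds_at \<Delta> n" "N = {}"
  using assms unfolding prog_Pi_def prog_pi_def
  by (elim UnE insertE) (auto intro: that)

lemma prog_Pi_constraint_cases: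
  assumes "(None, B, N) \<in> prog_Pi D \<Gamma> \<Delta> n"
  obtains (consistency) f t where "B = {Holds (Pos f) t, Holds (Neg f) t}" "N = {}" "t \<le> n"
  | (goal) "B = {}" "N = {Goal}"
  using assms unfolding prog_Pi_def prog_pi_def
  by (elim UnE insertE) (auto intro: that)

section \<open>Answer sets yield trajectories\<close>

locale plan_answer_set =
  fixes D :: "('f, 'a) domain" and \<Gamma> \<Delta> :: "'f lit set" and n :: nat and M :: "('f, 'a) atom set"
  assumes answer_set: "answer_set (prog_Pi D \<Gamma> \<Delta> n) M"
begin

lemma rule_fires: "(Some h, B, N) \<in> prog_Pi D \<Gamma> \<Delta> n \<Longrightarrow> N \<inter> M = {} \<Longrightarrow> B \<subseteq> M \<Longrightarrow> h \<in> M"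
  using answer_set_rule[OF answer_set] .

lemma supported:
  assumes "x \<in> M"
  obtains B N where "(Some x, B, N) \<in> prog_Pi D \<Gamma> \<Delta> n" "N \<inter> M = {}" "B \<subseteq> M"
  using answer_set_supported[OF answer_set assms] by blast

lemma Holds_time_le: "Holds l t \<in> M \<Longrightarrow> t \<le> n"
  by (erule supported, erule prog_Pi_rule_cases) auto

lemma Possible_iff: "Possible a t \<in> M \<longleftrightarrow> t \<le> n \<and> executable_in D a (s_of M t)"
proof
  assume "Possible a t \<in> M"
  then show "t \<le> n \<and> executable_in D a (s_of M t)"
    by (elim supported prog_Pi_rule_cases) (auto simp: holds_at_subset_iff executable_in_def)
next
  assume "t \<le> n \<and> executable_in D a (s_of M t)"
  then obtain P where "(a, P) \<in> exe D" "P \<subseteq> s_of M t" "t \<le> n"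
    unfolding executable_in_def by blast
  then show "Possible a t \<in> M"
    using rule_fires[OF prog_Pi_possible] holds_at_subset_iff by blast
qed

lemma Occ_imp_Possible: "Occ a t \<in> M \<Longrightarrow> Possible a t \<in> M"
  by (elim supported prog_Pi_rule_cases) auto

lemma Occ_imp_not_Nocc: "Occ a t \<in> M \<Longrightarrow> Nocc a t \<notin> M"
  by (elim supported prog_Pi_rule_cases) auto

lemma Nocc_imp_Occ: "Nocc a t \<in> M \<Longrightarrow> \<exists>b. b \<noteq> a \<and> Occ b t \<in> M"
  by (elim supported prog_Pi_rule_cases) auto

lemma Occ_unique:
  assumes "Occ a t \<in> M" "Occ b t \<in> M"
  shows "a = b"
proof (rule ccontr)
  assume "a \<noteq> b"
  moreover have "t \<le> n"
    using assms(1) Occ_imp_Possible Possible_iff by blast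
  ultimately have "Nocc a t \<in> M"
    using rule_fires[OF prog_Pi_nocc] assms(2) by blast
  then show False
    using Occ_imp_not_Nocc assms(1) by blast
qed

lemma Possible_imp_Occ:
  assumes "Possible a t \<in> M"
  shows "\<exists>b. Occ b t \<in> M"
proof (rule ccontr)
  assume none: "\<nexists>b. Occ b t \<in> M"
  then have "Nocc a t \<notin> M"
    using Nocc_imp_Occ by blast
  moreover have "t \<le> n"
    using assms Possible_iff by blast
  ultimately have "Occ a t \<in> M"
    using rule_fires[OF prog_Pi_occ] assms by blast
  with none show False
    by blast
qed

lemma goal_reached: "\<Delta> \<subseteq> s_of M n"
proof -
  have "Goal \<in> M"
    using answer_set_constraint[OF answer_set prog_Pi_goal_constraint] by blast
  then show ?thesis
    by (elim supported prog_Pi_rule_cases) (auto simp: holds_at_subset_iff)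
qed

lemma consistent_s_of: "consistent_lits (s_of M t)"
  unfolding consistent_lits_def s_of_def
  using answer_set_constraint[OF answer_set prog_Pi_consistency] Holds_time_le by blast

lemma closed_s_of: "t \<le> n \<Longrightarrow> closed_under (stat D) (s_of M t)"
  unfolding closed_under_def
  using consistent_s_of rule_fires[OF prog_Pi_static] holds_at_subset_iff
  by (fastforce simp: s_of_def)

lemma s_of_0_least:
  assumes "closed_under (stat D) w" "\<Gamma> \<subseteq> w"
  shows "s_of M 0 \<subseteq> w"
proof -
  have "\<forall>l. x = Holds l 0 \<longrightarrow> l \<in> w" if "x \<in> M" for x
    using answer_set that
  proof (induction rule: answer_set_induct)
    case (rule h B N)
    from rule.hyps(1) show ?case
    proof (cases rule: prog_Pi_rule_cases)
      case (static P f t)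
      then show ?thesis
        using rule.IH assms(1) unfolding closed_under_def holds_at_def by fastforce
    qed (use assms(2) in auto)
  qed
  then show ?thesis
    unfolding s_of_def by blast
qed

lemma s_of_Suc_least:
  assumes w: "closed_under (stat D) w" "s_of M t \<inter> s_of M (Suc t) \<subseteq> w"
    and eff: "\<And>a. Occ a t \<in> M \<Longrightarrow> eff D a (s_of M t) \<subseteq> w"
  shows "s_of M (Suc t) \<subseteq> w"
proof -
  have "\<forall>l. x = Holds l (Suc t) \<longrightarrow> l \<in> w" if "x \<in> M" for x
    using answer_set that
  proof (induction rule: answer_set_induct)
    case (rule h B N)
    from rule.hyps(1) show ?case
    proof (cases rule: prog_Pi_rule_cases)
      case (dynamic a f P t')
      then have "t' = t \<Longrightarrow> f \<in> eff D a (s_of M t)"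
        using rule.hyps(3) unfolding eff_def by (auto simp: holds_at_subset_iff)
      then show ?thesis
        using dynamic rule.hyps(3) eff by auto
    next
      case (static P f t')
      then show ?thesis
        using rule.IH w(1) unfolding closed_under_def holds_at_def by fastforce
    next
      case (inertia l t')
      then have "h \<in> M"
        using rule_fires rule.hyps by blast
      then show ?thesis
        using inertia rule.hyps(3) w(2) by (auto simp: s_of_def)
    qed auto
  qed
  then show ?thesis
    unfolding s_of_def by blast
qed

end

locale plan_answer_set_from_state = plan_answer_set +
  assumes initial_state: "is_state D \<Gamma>"
begin

lemma s_of_0: "s_of M 0 = \<Gamma>"
proof
  show "s_of M 0 \<subseteq> \<Gamma>"
    using initial_state s_of_0_least unfolding is_state_def by blast
  show "\<Gamma> \<subseteq> s_of M 0"
    using rule_fires[OF prog_Pi_init] unfolding s_of_def by blast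
qed

lemma s_of_complete: "t \<le> n \<Longrightarrow> l \<in> s_of M t \<or> comp l \<in> s_of M t"
proof (induction t arbitrary: l)
  case 0
  then show ?case
    using initial_state s_of_0 unfolding is_state_def is_interpretation_iff by blast
next
  case (Suc t)
  then obtain m where m: "m = l \<or> m = comp l" "m \<in> s_of M t"
    by fastforce
  have "m \<in> s_of M (Suc t) \<or> comp m \<in> s_of M (Suc t)"
    using rule_fires[OF prog_Pi_inertia[of t n m]] Suc.prems m(2) by (auto simp: s_of_def)
  with m(1) show ?case
    by auto
qed

lemma is_state_s_of: "t \<le> n \<Longrightarrow> is_state D (s_of M t)"
  unfolding is_state_def is_interpretation_iff
  using consistent_s_of s_of_complete closed_s_of by blast

lemma s_of_Suc_in_Phi:
  assumes t: "t < n" and occ: "Occ a t \<in> M"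
  shows "s_of M (Suc t) \<in> Phi D a (s_of M t)"
proof -
  let ?s = "s_of M t" and ?s' = "s_of M (Suc t)"
  have exec: "executable_in D a ?s"
    using occ Occ_imp_Possible Possible_iff by blast
  have eff: "eff D a ?s \<subseteq> ?s'"
  proof
    fix f assume "f \<in> eff D a ?s"
    then obtain P where "(a, f, P) \<in> dyn D" "P \<subseteq> ?s"
      unfolding eff_def by blast
    moreover have "Possible a t \<in> M"
      using occ by (rule Occ_imp_Possible)
    ultimately have "Holds f (Suc t) \<in> M"
      using rule_fires[OF prog_Pi_dynamic[OF _ t]] occ holds_at_subset_iff by blast
    then show "f \<in> ?s'"
      unfolding s_of_def by blast
  qed
  have least: "?s' \<subseteq> w" if "eff D a ?s \<union> (?s \<inter> ?s') \<subseteq> w" "closed_under (stat D) w" for w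
  proof (rule s_of_Suc_least)
    show "eff D b ?s \<subseteq> w" if "Occ b t \<in> M" for b
      using Occ_unique[OF occ that] \<open>eff D a ?s \<union> (?s \<inter> ?s') \<subseteq> w\<close> by blast
  qed (use that in blast)+
  have "is_Cl (stat D) (eff D a ?s \<union> (?s \<inter> ?s')) ?s'"
    unfolding is_Cl_def using eff least closed_s_of[of "Suc t"] t by simp
  with exec show ?thesis
    unfolding Phi_def using is_state_s_of[of "Suc t"] t by simp
qed

lemma s_of_Suc_eq_if_stuck:
  assumes t: "t < n" and stuck: "\<forall>b. \<not> executable_in D b (s_of M t)"
  shows "s_of M (Suc t) = s_of M t"
proof -
  have "s_of M (Suc t) \<subseteq> s_of M t"
    using t stuck closed_s_of Occ_imp_Possible Possible_iff by (intro s_of_Suc_least) auto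
  moreover have "is_interpretation (s_of M (Suc t))"
    using is_state_s_of[of "Suc t"] t unfolding is_state_def by simp
  ultimately show ?thesis
    using is_interpretation_eq_if_subset consistent_s_of by blast
qed

lemma stuck_persists:
  assumes "t \<le> n" "\<forall>b. \<not> executable_in D b (s_of M t)"
  shows "s_of M n = s_of M t"
  using assms(1)
proof (induction rule: dec_induct)
  case (step m)
  then show ?case
    using s_of_Suc_eq_if_stuck[of m] assms(2) by simp
qed simp

lemma trajectory_prefix:
  "\<exists>k\<le>n. \<exists>a. (\<forall>i<k. Occ (a i) i \<in> M) \<and> trajectory D (s_of M) a k \<and> \<Delta> \<subseteq> s_of M k
     \<and> (k < n \<longrightarrow> (\<forall>b. \<not> executable_in D b (s_of M k)))"
proof -
  define stuck where "stuck t \<longleftrightarrow> (\<forall>b. \<not> executable_in D b (s_of M t))" for t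
  define k where "k = (LEAST t. t = n \<or> stuck t)"
  define a where "a i = (SOME b. Occ b i \<in> M)" for i
  have k: "k \<le> n" "k = n \<or> stuck k"
    unfolding k_def by (rule Least_le, simp) (rule LeastI[of _ n], simp)
  have occ: "Occ (a i) i \<in> M" if "i < k" for i
  proof -
    have "i < n" "\<not> stuck i"
      using that k(1) not_less_Least[of i "\<lambda>t. t = n \<or> stuck t"] unfolding k_def by auto
    then obtain b where "Possible b i \<in> M"
      using Possible_iff unfolding stuck_def by auto
    then show ?thesis
      unfolding a_def using Possible_imp_Occ by (auto intro: someI_ex)
  qed
  moreover have "trajectory D (s_of M) a k"
    unfolding trajectory_def using is_state_s_of s_of_Suc_in_Phi occ k(1) by auto
  moreover have "\<Delta> \<subseteq> s_of M k"
    using k goal_reached stuck_persists unfolding stuck_def by auto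
  ultimately show ?thesis
    using k unfolding stuck_def by blast
qed

end

section \<open>Trajectories yield answer sets\<close>

(* Rules (5) also range over the horizon t = n, so an executable action must occur there too. *)
definition occurring_action ::
    "('f, 'a) domain \<Rightarrow> (nat \<Rightarrow> 'f lit set) \<Rightarrow> (nat \<Rightarrow> 'a) \<Rightarrow> nat \<Rightarrow> nat \<Rightarrow> 'a option" where
  "occurring_action D s a n t =
     (if t < n then Some (a t)
      else if t = n \<and> (\<exists>b. executable_in D b (s n)) then Some (SOME b. executable_in D b (s n))
      else None)"

definition trajectory_model ::
    "('f, 'a) domain \<Rightarrow> (nat \<Rightarrow> 'f lit set) \<Rightarrow> (nat \<Rightarrow> 'a) \<Rightarrow> nat \<Rightarrow> ('f, 'a) atom set" where
  "trajectory_model D s a n =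
     {Holds l t | l t. t \<le> n \<and> l \<in> s t}
   \<union> {Possible b t | b t. t \<le> n \<and> executable_in D b (s t)}
   \<union> {Occ b t | b t. occurring_action D s a n t = Some b}
   \<union> {Nocc b t | b t. \<exists>c. occurring_action D s a n t = Some c \<and> c \<noteq> b}
   \<union> {Goal}"

locale goal_trajectory =
  fixes D :: "('f, 'a) domain" and \<Gamma> \<Delta> :: "'f lit set" and n :: nat
    and s :: "nat \<Rightarrow> 'f lit set" and a :: "nat \<Rightarrow> 'a"
  assumes trajectory: "trajectory D s a n" and initial: "s 0 = \<Gamma>" and goal: "\<Delta> \<subseteq> s n"
begin

abbreviation model :: "('f, 'a) atom set" where
  "model \<equiv> trajectory_model D s a n"

lemma Holds_in_model [simp]: "Holds l t \<in> model \<longleftrightarrow> t \<le> n \<and> l \<in> s t"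
  and Possible_in_model [simp]: "Possible b t \<in> model \<longleftrightarrow> t \<le> n \<and> executable_in D b (s t)"
  and Occ_in_model [simp]: "Occ b t \<in> model \<longleftrightarrow> occurring_action D s a n t = Some b"
  and Nocc_in_model [simp]:
    "Nocc b t \<in> model \<longleftrightarrow> (\<exists>c. occurring_action D s a n t = Some c \<and> c \<noteq> b)"
  and Goal_in_model [simp]: "Goal \<in> model"
  unfolding trajectory_model_def by auto

lemma holds_at_subset_model [simp]: "holds_at P t \<subseteq> model \<longleftrightarrow> (P = {} \<or> t \<le> n) \<and> P \<subseteq> s t"
  unfolding holds_at_def by auto

lemma s_of_model: "t \<le> n \<Longrightarrow> s_of model t = s t"
  unfolding s_of_def by auto

lemma s_is_state: "t \<le> n \<Longrightarrow> is_state D (s t)"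
  using trajectory unfolding trajectory_def by auto

lemma step_executable: "t < n \<Longrightarrow> executable_in D (a t) (s t)"
  using trajectory unfolding trajectory_def Phi_def by (auto split: if_splits)

lemma step_is_Cl:
  "t < n \<Longrightarrow> is_Cl (stat D) (eff D (a t) (s t) \<union> (s t \<inter> s (Suc t))) (s (Suc t))"
  using trajectory unfolding trajectory_def Phi_def by (auto split: if_splits)

lemma occurring_action_executable:
  "occurring_action D s a n t = Some b \<Longrightarrow> t \<le> n \<and> executable_in D b (s t)"
  unfolding occurring_action_def using step_executable by (auto split: if_splits intro: someI)

lemma occurring_action_exists:
  "t \<le> n \<Longrightarrow> executable_in D b (s t) \<Longrightarrow> \<exists>c. occurring_action D s a n t = Some c"
  unfolding occurring_action_def by auto

lemma model_closed: "rules_closed (reduct (prog_Pi D \<Gamma> \<Delta> n) model) model"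
  unfolding rules_closed_def
proof (intro allI impI)
  fix h B assume "(Some h, B) \<in> reduct (prog_Pi D \<Gamma> \<Delta> n) model \<and> B \<subseteq> model"
  then obtain N where rule: "(Some h, B, N) \<in> prog_Pi D \<Gamma> \<Delta> n" "N \<inter> model = {}" "B \<subseteq> model"
    unfolding reduct_def by blast
  from rule(1) show "h \<in> model"
  proof (cases rule: prog_Pi_rule_cases)
    case (init l)
    then show ?thesis
      using initial by simp
  next
    case (possible b P t)
    then show ?thesis
      using rule(3) by (auto simp: executable_in_def)
  next
    case (dynamic b f P t)
    then have "b = a t" "P \<subseteq> s t"
      using rule(3) by (auto simp: occurring_action_def)
    then have "f \<in> eff D (a t) (s t)"
      using dynamic unfolding eff_def by blast
    then show ?thesis
      using step_is_Cl[of t] dynamic unfolding is_Cl_def by auto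
  next
    case (static P f t)
    then have "P \<subseteq> s t"
      using rule(3) by (cases "P = {}") auto
    then show ?thesis
      using static s_is_state[of t] unfolding is_state_def closed_under_def by auto
  next
    case (occ b t)
    then show ?thesis
      using rule(2,3) occurring_action_exists[of t b] by auto
  next
    case (inertia l t)
    then have "comp l \<notin> s (Suc t)" "l \<in> s t"
      using rule(2,3) by auto
    then show ?thesis
      using inertia s_is_state[of "Suc t"] unfolding is_state_def is_interpretation_iff by auto
  qed (use rule(3) in auto)
qed

lemma model_constraints: "(None, B) \<in> reduct (prog_Pi D \<Gamma> \<Delta> n) model \<Longrightarrow> \<not> B \<subseteq> model"
proof
  assume "(None, B) \<in> reduct (prog_Pi D \<Gamma> \<Delta> n) model" "B \<subseteq> model"
  then obtain N where rule: "(None, B, N) \<in> prog_Pi D \<Gamma> \<Delta> n" "N \<inter> model = {}" "B \<subseteq> model"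
    unfolding reduct_def by blast
  from rule(1) show False
  proof (cases rule: prog_Pi_constraint_cases)
    case (consistency f t)
    then have "Pos f \<in> s t" "Neg f \<in> s t"
      using rule(3) by auto
    then show False
      using s_is_state[of t] consistency(3)
      unfolding is_state_def is_interpretation_def consistent_lits_def by blast
  qed (use rule(2) in simp)
qed

context
  fixes X :: "('f, 'a) atom set"
  assumes X: "rules_closed (reduct (prog_Pi D \<Gamma> \<Delta> n) model) X"
begin

lemma rule_fires_in_X:
  "(Some h, B, N) \<in> prog_Pi D \<Gamma> \<Delta> n \<Longrightarrow> N \<inter> model = {} \<Longrightarrow> B \<subseteq> X \<Longrightarrow> h \<in> X"
  using X unfolding rules_closed_def reduct_def by blast

lemma Possible_in_X:
  assumes "t \<le> n" "executable_in D b (s t)" "\<forall>l\<in>s t. Holds l t \<in> X"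
  shows "Possible b t \<in> X"
proof -
  obtain P where "(b, P) \<in> exe D" "P \<subseteq> s t"
    using assms(2) unfolding executable_in_def by blast
  then show ?thesis
    using rule_fires_in_X[OF prog_Pi_possible] assms(1,3) unfolding holds_at_def by blast
qed

lemma Occ_in_X:
  assumes "occurring_action D s a n t = Some b" "\<forall>l\<in>s t. Holds l t \<in> X"
  shows "Occ b t \<in> X"
proof -
  have "t \<le> n" "Possible b t \<in> X"
    using occurring_action_executable[OF assms(1)] Possible_in_X assms(2) by auto
  then show ?thesis
    using rule_fires_in_X[OF prog_Pi_occ] assms(1) by auto
qed

lemma Holds_Suc_in_X:
  assumes t: "t < n" and IH: "\<forall>l\<in>s t. Holds l t \<in> X"
  shows "\<forall>l\<in>s (Suc t). Holds l (Suc t) \<in> X"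
proof
  have act: "Occ (a t) t \<in> X" "Possible (a t) t \<in> X"
    using Occ_in_X Possible_in_X step_executable t IH by (auto simp: occurring_action_def)
  have cons: "consistent_lits (s (Suc t))"
    using s_is_state[of "Suc t"] t unfolding is_state_def is_interpretation_def by simp
  fix l assume "l \<in> s (Suc t)"
  with step_is_Cl[OF t] show "Holds l (Suc t) \<in> X"
  proof (induction rule: is_Cl_induct)
    case (base l)
    then consider "l \<in> eff D (a t) (s t)" | "l \<in> s t" "l \<in> s (Suc t)"
      by blast
    then show ?case
    proof cases
      case 1
      then obtain P where "(a t, l, P) \<in> dyn D" "P \<subseteq> s t"
        unfolding eff_def by blast
      then show ?thesis
        using rule_fires_in_X[OF prog_Pi_dynamic[OF _ t]] act IH unfolding holds_at_def by blast
    next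
      case 2
      then have "comp l \<notin> s (Suc t)"
        using consistent_lits_comp[OF cons] by blast
      then show ?thesis
        using rule_fires_in_X[OF prog_Pi_inertia[OF t]] IH 2 by auto
    qed
  next
    case (step Q f)
    then show ?case
      using rule_fires_in_X[OF prog_Pi_static[of Q f D "Suc t" n]] t
      unfolding holds_at_def by auto
  qed
qed

lemma Holds_in_X: "t \<le> n \<Longrightarrow> \<forall>l\<in>s t. Holds l t \<in> X"
proof (induction t)
  case 0
  then show ?case
    using rule_fires_in_X[OF prog_Pi_init] initial by auto
next
  case (Suc t)
  then show ?case
    using Holds_Suc_in_X by simp
qed

lemma model_subset_X: "model \<subseteq> X"
proof
  fix x assume x: "x \<in> model"
  show "x \<in> X"
  proof (cases x)
    case (Holds l t)
    then show ?thesis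
      using x Holds_in_X by auto
  next
    case (Possible b t)
    then show ?thesis
      using x Holds_in_X Possible_in_X by auto
  next
    case (Occ b t)
    then show ?thesis
      using x Holds_in_X Occ_in_X occurring_action_executable by auto
  next
    case (Nocc b t)
    then obtain c where c: "occurring_action D s a n t = Some c" "b \<noteq> c"
      using x by auto
    then have "Occ c t \<in> X" "t \<le> n"
      using Occ_in_X Holds_in_X occurring_action_executable by blast+
    then show ?thesis
      using rule_fires_in_X[OF prog_Pi_nocc[OF c(2)]] Nocc by auto
  next
    case Goal
    then show ?thesis
      using rule_fires_in_X[OF prog_Pi_goal] goal Holds_in_X[of n] unfolding holds_at_def by auto
  qed
qed

end

lemma answer_set_model: "answer_set (prog_Pi D \<Gamma> \<Delta> n) model"
  unfolding answer_set_def using model_closed model_subset_X model_constraints by blast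

lemma answer_set_from_trajectory:
  "\<exists>M. answer_set (prog_Pi D \<Gamma> \<Delta> n) M \<and> (\<forall>i<n. Occ (a i) i \<in> M) \<and> (\<forall>i\<le>n. s i = s_of M i)"
  using answer_set_model s_of_model by (auto simp: occurring_action_def)

end

theorem theorem1:
  fixes D :: "('f::finite, 'a::finite) domain"
    and \<Gamma> \<Delta> :: "'f lit set"
    and n :: nat
  assumes "finite_domain D"
    and "consistent_theory D \<Gamma>"
  shows "(\<forall>s a. trajectory D s a n \<and> s 0 = \<Gamma> \<and> \<Delta> \<subseteq> s n \<longrightarrow>
            (\<exists>M. answer_set (prog_Pi D \<Gamma> \<Delta> n) M \<and> (\<forall>i<n. Occ (a i) i \<in> M)
                 \<and> (\<forall>i\<le>n. s i = s_of M i)))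
       \<and> (\<forall>M. answer_set (prog_Pi D \<Gamma> \<Delta> n) M \<longrightarrow>
            (\<exists>k\<le>n. \<exists>a. (\<forall>i<k. Occ (a i) i \<in> M)
                 \<and> trajectory D (s_of M) a k \<and> \<Delta> \<subseteq> s_of M k
                 \<and> (k < n \<longrightarrow> (\<forall>b. \<not> executable_in D b (s_of M k)))))"
proof (intro conjI allI impI)
  fix s a
  assume "trajectory D s a n \<and> s 0 = \<Gamma> \<and> \<Delta> \<subseteq> s n"
  then interpret goal_trajectory D \<Gamma> \<Delta> n s a
    by unfold_locales blast+
  show "\<exists>M. answer_set (prog_Pi D \<Gamma> \<Delta> n) M \<and> (\<forall>i<n. Occ (a i) i \<in> M) \<and> (\<forall>i\<le>n. s i = s_of M i)"
    by (rule answer_set_from_trajectory)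
next
  fix M
  assume "answer_set (prog_Pi D \<Gamma> \<Delta> n) M"
  moreover have "is_state D \<Gamma>"
    using assms(2) unfolding consistent_theory_def by blast
  ultimately interpret plan_answer_set_from_state D \<Gamma> \<Delta> n M
    by unfold_locales
  show "\<exists>k\<le>n. \<exists>a. (\<forall>i<k. Occ (a i) i \<in> M) \<and> trajectory D (s_of M) a k \<and> \<Delta> \<subseteq> s_of M k
          \<and> (k < n \<longrightarrow> (\<forall>b. \<not> executable_in D b (s_of M k)))"
    by (rule trajectory_prefix)
qed

end
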